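(* A Schröder permutation $\pi\in\mathcal{S}_n$ avoids $231$ if and only if (i) every diagram row of $\pi$ contains exactly one element of $\mathcal{E}(\pi)$, and (ii) every diagram column of $\pi$ contains at most one element of $\mathcal{E}(\pi)$.
   Context: A permutation avoids $\tau\in\mathcal{S}_k$ if no subsequence of length $k$ is in the same relative order as $\tau$. A Schröder permutation is one avoiding both $1243$ and $2143$. Represent $\pi\in\mathcal{S}_n$ by an $n\times n$ array, rows $i$ numbered top to bottom, columns $j$ left to right, with a dot in square $(i,\pi_i)$. The diagram $D(\pi)$ is the set of squares $(i,j)$ with $\pi_i>j$ and $\pi^{-1}(j)>i$. A diagram row (resp. diagram column) is a row (resp. column) of the array containing at least one square of $D(\pi)$. The essential set $\mathcal{E}(\pi)$ is the set of $(i,j)\in D(\pi)$ with $(i+1,j)\notin D(\pi)$ and $(i,j+1)\notin D(\pi)$ (squares outside the array count as not in $D(\pi)$). *)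

theory Defs
  imports "HOL-Combinatorics.Permutations"
begin

definition contains_pattern :: "nat \<Rightarrow> (nat \<Rightarrow> nat) \<Rightarrow> nat list \<Rightarrow> bool" where
  "contains_pattern n \<pi> \<tau> \<longleftrightarrow>
     (\<exists>idx :: nat list. length idx = length \<tau> \<and> sorted_wrt (<) idx \<and> set idx \<subseteq> {1..n} \<and>
        (\<forall>a < length \<tau>. \<forall>b < length \<tau>.
            (\<pi> (idx ! a) < \<pi> (idx ! b)) \<longleftrightarrow> (\<tau> ! a < \<tau> ! b)))"

definition avoids :: "nat \<Rightarrow> (nat \<Rightarrow> nat) \<Rightarrow> nat list \<Rightarrow> bool" where
  "avoids n \<pi> \<tau> \<longleftrightarrow> \<not> contains_pattern n \<pi> \<tau>"

definition schroeder :: "nat \<Rightarrow> (nat \<Rightarrow> nat) \<Rightarrow> bool" where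
  "schroeder n \<pi> \<longleftrightarrow> avoids n \<pi> [1,2,4,3] \<and> avoids n \<pi> [2,1,4,3]"

definition diagram :: "nat \<Rightarrow> (nat \<Rightarrow> nat) \<Rightarrow> (nat \<times> nat) set" where
  "diagram n \<pi> = {(i,j). i \<in> {1..n} \<and> j \<in> {1..n} \<and> \<pi> i > j \<and> inv \<pi> j > i}"

definition essential_set :: "nat \<Rightarrow> (nat \<Rightarrow> nat) \<Rightarrow> (nat \<times> nat) set" where
  "essential_set n \<pi> = {(i,j). (i,j) \<in> diagram n \<pi> \<and> (i+1,j) \<notin> diagram n \<pi> \<and> (i,j+1) \<notin> diagram n \<pi>}"

definition diagram_row :: "nat \<Rightarrow> (nat \<Rightarrow> nat) \<Rightarrow> nat \<Rightarrow> bool" where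
  "diagram_row n \<pi> i \<longleftrightarrow> (\<exists>j. (i,j) \<in> diagram n \<pi>)"

definition diagram_col :: "nat \<Rightarrow> (nat \<Rightarrow> nat) \<Rightarrow> nat \<Rightarrow> bool" where
  "diagram_col n \<pi> j \<longleftrightarrow> (\<exists>i. (i,j) \<in> diagram n \<pi>)"

end

theory Submission
  imports Defs
begin

text \<open>An essential square (i, j) is exactly a diagram square with \<pi> (i+1) \<le> j and
  inv \<pi> (j+1) \<le> i. If \<pi> avoids 231, then moreover \<pi> i = j+1, since otherwise
  inv \<pi> (j+1) < i < i+1 is an occurrence of 231. So every essential square lies immediately
  left of the dot of its row, which allows at most one per row and per column, and the
  rightmost square of a diagram row turns out to be essential.

  Conversely, choose an occurrence a < b < c of 231 with \<pi> a = \<pi> c + 1 = j + 1. If \<pi> stays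
  above j on [a, b], then an ascent of \<pi> inside [a, b] is a diagram row without essential
  square. Otherwise \<pi> falls to at most j somewhere in (a, b] and again at c, and the last
  positions before these two falls are essential squares in column j.\<close>

lemma ex_switch_point:
  fixes P :: "nat \<Rightarrow> bool"
  assumes "P b" and "\<not> P c" and "b < c"
  shows "\<exists>u. b \<le> u \<and> u < c \<and> P u \<and> \<not> P (Suc u)"
  using assms
proof (induction c)
  case 0
  then show ?case by simp
next
  case (Suc c)
  show ?case
  proof (cases "P c")
    case True
    with Suc.prems show ?thesis by (intro exI[of _ c]) auto
  next
    case False
    with Suc.prems have "b < c" by (metis less_SucE)
    with Suc.IH[OF Suc.prems(1) False] show ?thesis by auto
  qed
qed

lemma contains_231_iff:
  "contains_pattern n \<pi> [2,3,1] \<longleftrightarrow>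
    (\<exists>a b c. 1 \<le> a \<and> a < b \<and> b < c \<and> c \<le> n \<and> \<pi> c < \<pi> a \<and> \<pi> a < \<pi> b)"
  (is "_ \<longleftrightarrow> (\<exists>a b c. ?occ a b c)")
proof
  assume "contains_pattern n \<pi> [2,3,1]"
  then show "\<exists>a b c. ?occ a b c"
    unfolding contains_pattern_def
    by (auto simp: numeral_3_eq_3 All_less_Suc2 length_Suc_conv) blast
next
  assume "\<exists>a b c. ?occ a b c"
  then obtain a b c where "?occ a b c" by blast
  then show "contains_pattern n \<pi> [2,3,1]"
    unfolding contains_pattern_def
    by (intro exI[of _ "[a, b, c]"]) (auto simp: numeral_3_eq_3 All_less_Suc2)
qed

lemma mem_diagram_iff:
  "(i, j) \<in> diagram n \<pi> \<longleftrightarrow> 1 \<le> i \<and> i \<le> n \<and> 1 \<le> j \<and> j \<le> n \<and> j < \<pi> i \<and> i < inv \<pi> j"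
  by (auto simp: diagram_def)

locale perm_diagram =
  fixes n :: nat and \<pi> :: "nat \<Rightarrow> nat"
  assumes permutes: "\<pi> permutes {1..n}"
begin

lemma apply_in_range: "i \<in> {1..n} \<Longrightarrow> \<pi> i \<in> {1..n}"
  using permutes_in_image[OF permutes] by blast

lemma inv_in_range: "j \<in> {1..n} \<Longrightarrow> inv \<pi> j \<in> {1..n}"
  using permutes_in_image[OF permutes_inv[OF permutes]] by blast

lemma apply_inv [simp]: "\<pi> (inv \<pi> j) = j"
  using permutes_inverses(1)[OF permutes] .

lemma inv_apply [simp]: "inv \<pi> (\<pi> i) = i"
  using permutes_inverses(2)[OF permutes] .

lemma apply_eq_iff [simp]: "\<pi> i = \<pi> i' \<longleftrightarrow> i = i'"
  using permutes_inj[OF permutes] by (auto dest: injD)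

lemma essential_set_iff:
  "(i, j) \<in> essential_set n \<pi> \<longleftrightarrow>
    (i, j) \<in> diagram n \<pi> \<and> \<pi> (Suc i) \<le> j \<and> inv \<pi> (Suc j) \<le> i"
proof
  assume "(i, j) \<in> essential_set n \<pi>"
  then have D: "(i, j) \<in> diagram n \<pi>"
    and below: "(Suc i, j) \<notin> diagram n \<pi>" and right: "(i, Suc j) \<notin> diagram n \<pi>"
    by (simp_all add: essential_set_def)
  have "\<pi> (Suc i) \<le> j"
  proof (rule ccontr)
    assume "\<not> \<pi> (Suc i) \<le> j"
    moreover from this have "inv \<pi> j \<noteq> Suc i" by (metis apply_inv order_refl)
    ultimately have "(Suc i, j) \<in> diagram n \<pi>"
      using D inv_in_range[of j] by (auto simp: mem_diagram_iff)
    with below show False ..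
  qed
  moreover have "inv \<pi> (Suc j) \<le> i"
  proof (rule ccontr)
    assume "\<not> inv \<pi> (Suc j) \<le> i"
    moreover from this have "\<pi> i \<noteq> Suc j" by (metis inv_apply order_refl)
    ultimately have "(i, Suc j) \<in> diagram n \<pi>"
      using D apply_in_range[of i] by (auto simp: mem_diagram_iff)
    with right show False ..
  qed
  ultimately show "(i, j) \<in> diagram n \<pi> \<and> \<pi> (Suc i) \<le> j \<and> inv \<pi> (Suc j) \<le> i"
    using D by blast
qed (auto simp: essential_set_def mem_diagram_iff)

lemma essential_imp_descent: "(i, j) \<in> essential_set n \<pi> \<Longrightarrow> \<pi> (Suc i) < \<pi> i"
  by (auto simp: essential_set_iff mem_diagram_iff)

lemma essential_left_of_dot_if_avoids_231:
  assumes avoids: "avoids n \<pi> [2,3,1]" and E: "(i, j) \<in> essential_set n \<pi>"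
  shows "\<pi> i = Suc j"
proof (rule ccontr)
  assume "\<pi> i \<noteq> Suc j"
  from E have D: "(i, j) \<in> diagram n \<pi>" and "\<pi> (Suc i) \<le> j" and "inv \<pi> (Suc j) \<le> i"
    by (simp_all add: essential_set_iff)
  with \<open>\<pi> i \<noteq> Suc j\<close> have "Suc j < \<pi> i" by (auto simp: mem_diagram_iff)
  define a where "a = inv \<pi> (Suc j)"
  have "Suc j \<in> {1..n}" using D apply_in_range[of i] \<open>Suc j < \<pi> i\<close> by (auto simp: mem_diagram_iff)
  then have "1 \<le> a" using inv_in_range by (auto simp: a_def)
  moreover have "a < i" using \<open>inv \<pi> (Suc j) \<le> i\<close> \<open>\<pi> i \<noteq> Suc j\<close> by (auto simp: a_def le_less)
  moreover have "Suc i \<le> n" using D inv_in_range[of j] by (auto simp: mem_diagram_iff)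
  ultimately have "contains_pattern n \<pi> [2,3,1]"
    unfolding contains_231_iff
    using \<open>\<pi> (Suc i) \<le> j\<close> \<open>Suc j < \<pi> i\<close> by (intro exI[of _ a] exI[of _ i] exI[of _ "Suc i"]) (simp add: a_def)
  with avoids show False by (simp add: avoids_def)
qed

lemma rightmost_square_essential_if_avoids_231:
  assumes avoids: "avoids n \<pi> [2,3,1]" and D: "(i, j) \<in> diagram n \<pi>"
    and rightmost: "\<And>j'. (i, j') \<in> diagram n \<pi> \<Longrightarrow> j' \<le> j"
  shows "(i, j) \<in> essential_set n \<pi>"
proof -
  have "(i, Suc j) \<notin> diagram n \<pi>" using rightmost by fastforce
  moreover have "(Suc i, j) \<notin> diagram n \<pi>"
  proof
    assume below: "(Suc i, j) \<in> diagram n \<pi>"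
    show False
    proof (cases "\<pi> (Suc i) < \<pi> i")
      case True
      with D below have "(i, \<pi> (Suc i)) \<in> diagram n \<pi>"
        using apply_in_range[of "Suc i"] by (auto simp: mem_diagram_iff)
      with rightmost below show False by (fastforce simp: mem_diagram_iff)
    next
      case False
      then have "\<pi> i < \<pi> (Suc i)" using apply_eq_iff[of i "Suc i"] by linarith
      with D below have "contains_pattern n \<pi> [2,3,1]"
        unfolding contains_231_iff
        using inv_in_range[of j]
        by (intro exI[of _ i] exI[of _ "Suc i"] exI[of _ "inv \<pi> j"]) (auto simp: mem_diagram_iff)
      with avoids show False by (simp add: avoids_def)
    qed
  qed
  ultimately show ?thesis using D by (simp add: essential_set_def)
qed

lemma essential_row_if_avoids_231:
  assumes avoids: "avoids n \<pi> [2,3,1]" and "diagram_row n \<pi> i"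
  shows "{j. (i, j) \<in> essential_set n \<pi>} = {\<pi> i - 1}"
proof -
  define R where "R = {j. (i, j) \<in> diagram n \<pi>}"
  have "finite R" by (rule finite_subset[of _ "{1..n}"]) (auto simp: R_def mem_diagram_iff)
  moreover have "R \<noteq> {}" using \<open>diagram_row n \<pi> i\<close> by (simp add: R_def diagram_row_def)
  ultimately have "(i, Max R) \<in> essential_set n \<pi>"
    using Max_in Max_ge by (intro rightmost_square_essential_if_avoids_231[OF avoids]) (auto simp: R_def)
  moreover have "j = \<pi> i - 1" if "(i, j) \<in> essential_set n \<pi>" for j
    using essential_left_of_dot_if_avoids_231[OF avoids that] by simp
  ultimately show ?thesis by fastforce
qed

lemma essential_col_if_avoids_231:
  assumes "avoids n \<pi> [2,3,1]"
  shows "{i. (i, j) \<in> essential_set n \<pi>} \<subseteq> {inv \<pi> (Suc j)}"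
  using essential_left_of_dot_if_avoids_231[OF assms] by (metis inv_apply mem_Collect_eq singletonI subsetI)

lemma contains_231_consecutive_values:
  assumes "contains_pattern n \<pi> [2,3,1]"
  obtains a b c where "1 \<le> a" "a < b" "b < c" "c \<le> n" "\<pi> a < \<pi> b" "\<pi> a = Suc (\<pi> c)"
proof -
  have consecutive:
    "\<exists>a b c. 1 \<le> a \<and> a < b \<and> b < c \<and> c \<le> n \<and> \<pi> a < \<pi> b \<and> \<pi> a = Suc (\<pi> c)"
    if "1 \<le> a" "a < b" "b < c" "c \<le> n" "\<pi> c < \<pi> a" "\<pi> a < \<pi> b" for a b c
    using that
  proof (induction "\<pi> a - \<pi> c" arbitrary: a b c rule: less_induct)
    case less
    show ?case
    proof (cases "\<pi> a = Suc (\<pi> c)")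
      case True
      with less.prems show ?thesis by blast
    next
      case False
      define q where "q = inv \<pi> (Suc (\<pi> c))"
      have "\<pi> q < \<pi> a" using False less.prems by (simp add: q_def)
      moreover have "\<pi> a \<in> {1..n}" using apply_in_range less.prems by simp
      ultimately have "q \<in> {1..n}" using inv_in_range by (simp add: q_def)
      consider "q < b" | "b < q" using \<open>\<pi> q < \<pi> a\<close> less.prems by (metis nat_neq_iff order.asym)
      then show ?thesis
      proof cases
        case 1
        with \<open>q \<in> {1..n}\<close> \<open>\<pi> q < \<pi> a\<close> less.prems show ?thesis
          by (intro exI[of _ q] exI[of _ b] exI[of _ c]) (auto simp: q_def)
      next
        case 2
        have "\<pi> a - \<pi> q < \<pi> a - \<pi> c" using \<open>\<pi> q < \<pi> a\<close> by (simp add: q_def)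
        with less.hyps[of a q b] \<open>q \<in> {1..n}\<close> \<open>\<pi> q < \<pi> a\<close> 2 less.prems show ?thesis by auto
      qed
    qed
  qed
  from assms obtain a b c
    where "1 \<le> a" "a < b" "b < c" "c \<le> n" "\<pi> c < \<pi> a" "\<pi> a < \<pi> b"
    unfolding contains_231_iff by blast
  with consecutive that show thesis by blast
qed

lemma finite_essential_col: "finite {i. (i, j) \<in> essential_set n \<pi>}"
  by (rule finite_subset[of _ "{1..n}"]) (auto simp: essential_set_def mem_diagram_iff)

lemma avoids_231_if_essential_rows_cols:
  assumes rows: "\<And>i. diagram_row n \<pi> i \<Longrightarrow> \<exists>j. (i, j) \<in> essential_set n \<pi>"
    and cols: "\<And>i i' j. (i, j) \<in> essential_set n \<pi> \<Longrightarrow> (i', j) \<in> essential_set n \<pi> \<Longrightarrow> i = i'"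
  shows "avoids n \<pi> [2,3,1]"
  unfolding avoids_def
proof
  assume "contains_pattern n \<pi> [2,3,1]"
  then obtain a b c where occ: "1 \<le> a" "a < b" "b < c" "c \<le> n" "\<pi> a < \<pi> b" "\<pi> a = Suc (\<pi> c)"
    by (rule contains_231_consecutive_values)
  define j where "j = \<pi> c"
  have "j \<in> {1..n}" using apply_in_range occ by (simp add: j_def)
  have in_diagram: "(s, j) \<in> diagram n \<pi>" if "a \<le> s" "s < c" "j < \<pi> s" for s
    using that occ \<open>j \<in> {1..n}\<close> by (auto simp: mem_diagram_iff j_def)
  have essential: "(s, j) \<in> essential_set n \<pi>" if "a \<le> s" "s < c" "j < \<pi> s" "\<not> j < \<pi> (Suc s)" for s
    using that in_diagram by (simp add: essential_set_iff j_def occ(6)[symmetric])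
  show False
  proof (cases "\<forall>s \<in> {a..b}. j < \<pi> s")
    case True
    have "\<not> (\<forall>s \<in> {a..<b}. \<pi> (Suc s) \<le> \<pi> s)"
    proof
      assume "\<forall>s \<in> {a..<b}. \<pi> (Suc s) \<le> \<pi> s"
      then show False
        using lift_Suc_antimono_le_ivl[where f = \<pi> and N = "{a..<b}" and n = a and n' = b]
          \<open>a < b\<close> \<open>\<pi> a < \<pi> b\<close> by auto
    qed
    then obtain s where "a \<le> s" "s < b" "\<pi> s < \<pi> (Suc s)" by (auto simp: not_le)
    with True \<open>b < c\<close> have "(s, j) \<in> diagram n \<pi>" by (intro in_diagram) auto
    then obtain j' where "(s, j') \<in> essential_set n \<pi>" using rows[of s] by (auto simp: diagram_row_def)
    from essential_imp_descent[OF this] \<open>\<pi> s < \<pi> (Suc s)\<close> show False by simp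
  next
    case False
    then obtain d where "a \<le> d" "d \<le> b" "\<not> j < \<pi> d" by auto
    with occ have "a < d" by (auto simp: j_def le_less)
    obtain t where "a \<le> t" "t < d" "j < \<pi> t" "\<not> j < \<pi> (Suc t)"
      using ex_switch_point[of "\<lambda>s. j < \<pi> s" a d] \<open>a < d\<close> \<open>\<not> j < \<pi> d\<close> occ by (auto simp: j_def)
    obtain u where "b \<le> u" "u < c" "j < \<pi> u" "\<not> j < \<pi> (Suc u)"
      using ex_switch_point[of "\<lambda>s. j < \<pi> s" b c] occ by (auto simp: j_def)
    have "(t, j) \<in> essential_set n \<pi>"
      using \<open>a \<le> t\<close> \<open>t < d\<close> \<open>d \<le> b\<close> \<open>b < c\<close> \<open>j < \<pi> t\<close> \<open>\<not> j < \<pi> (Suc t)\<close>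
      by (auto intro: essential)
    moreover have "(u, j) \<in> essential_set n \<pi>"
      using \<open>a < b\<close> \<open>b \<le> u\<close> \<open>u < c\<close> \<open>j < \<pi> u\<close> \<open>\<not> j < \<pi> (Suc u)\<close>
      by (auto intro: essential)
    ultimately have "t = u" by (rule cols)
    with \<open>t < d\<close> \<open>d \<le> b\<close> \<open>b \<le> u\<close> show False by simp
  qed
qed

end

theorem proposition3p11:
  fixes n :: nat and \<pi> :: "nat \<Rightarrow> nat"
  assumes "\<pi> permutes {1..n}" and "schroeder n \<pi>"
  shows "avoids n \<pi> [2,3,1] \<longleftrightarrow>
    ((\<forall>i. diagram_row n \<pi> i \<longrightarrow> card {j. (i,j) \<in> essential_set n \<pi>} = 1) \<and>
     (\<forall>j. diagram_col n \<pi> j \<longrightarrow> card {i. (i,j) \<in> essential_set n \<pi>} \<le> 1))"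
proof -
  interpret perm_diagram n \<pi> by unfold_locales (rule assms(1))
  show ?thesis
  proof (intro iffI conjI allI impI)
    fix i assume "avoids n \<pi> [2,3,1]" and "diagram_row n \<pi> i"
    then show "card {j. (i, j) \<in> essential_set n \<pi>} = 1" by (simp add: essential_row_if_avoids_231)
  next
    fix j assume "avoids n \<pi> [2,3,1]"
    then show "card {i. (i, j) \<in> essential_set n \<pi>} \<le> 1"
      using card_mono[OF _ essential_col_if_avoids_231] by simp
  next
    assume conds: "(\<forall>i. diagram_row n \<pi> i \<longrightarrow> card {j. (i,j) \<in> essential_set n \<pi>} = 1) \<and>
     (\<forall>j. diagram_col n \<pi> j \<longrightarrow> card {i. (i,j) \<in> essential_set n \<pi>} \<le> 1)"
    show "avoids n \<pi> [2,3,1]"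
    proof (rule avoids_231_if_essential_rows_cols)
      fix i assume "diagram_row n \<pi> i"
      with conds have "card {j. (i, j) \<in> essential_set n \<pi>} = 1" by blast
      then show "\<exists>j. (i, j) \<in> essential_set n \<pi>" by (metis card_1_singletonE mem_Collect_eq singletonI)
    next
      fix i i' j assume "(i, j) \<in> essential_set n \<pi>" and "(i', j) \<in> essential_set n \<pi>"
      moreover from this have "diagram_col n \<pi> j" by (auto simp: diagram_col_def essential_set_def)
      with conds have "card {i. (i, j) \<in> essential_set n \<pi>} \<le> 1" by blast
      ultimately show "i = i'" using card_le_Suc0_iff_eq[OF finite_essential_col] by auto
    qed
  qed
qed

end
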